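(* Let $(\mathcal{X},\mathfrak{X})$ and $(\mathcal{Y},\mathfrak{Y})$ be measurable spaces, let $\mu$ be a finite measure on $(\mathcal{X}\times\mathcal{Y},\mathfrak{X}\times\mathfrak{Y})$, let $f$ be a real-valued $\mu$-integrable function, and let $\nu$ be a finite measure on the same space with $\nu\ll\mu$. Then for every $\epsilon>0$ there exist a finite sub-$\sigma$-algebra $\mathfrak{C}$ of $\mathfrak{X}$ and a finite sub-$\sigma$-algebra $\mathfrak{D}$ of $\mathfrak{Y}$ such that \[ \nu\{|\mu^{\mathfrak{F}}f-f|\ge\epsilon\}<\epsilon \] for every $\sigma$-algebra $\mathfrak{F}$ with $\mathfrak{C}\times\mathfrak{D}\subseteq\mathfrak{F}\subseteq\mathfrak{X}\times\mathfrak{Y}$.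
   Context: For a finite measure $\lambda$ on $(\mathcal{Z},\mathfrak{Z})$, a $\lambda$-integrable $f$ and a sub-$\sigma$-algebra $\mathfrak{F}$, $\lambda^{\mathfrak{F}}f$ denotes the Radon–Nikodym derivative $\mathrm{d}(f\cdot\lambda)|_{\mathfrak{F}}/\mathrm{d}\lambda|_{\mathfrak{F}}$, where $(f\cdot\lambda)(A)=\int_A f\,\mathrm{d}\lambda$. $\mathfrak{C}\times\mathfrak{D}$ denotes the product $\sigma$-algebra. *)

theory Defs
  imports "HOL-Probability.Probability"
begin

end

theory Submission
  imports Defs
begin

text \<open>
  Approximate \<open>f\<close> in \<open>L\<^sup>1(\<mu>)\<close> by a function \<open>h\<close> that is measurable for \<open>C \<Otimes> D\<close>, with
  \<open>C\<close>, \<open>D\<close> finite sub-\<open>\<sigma>\<close>-algebras: the product \<open>\<sigma>\<close>-algebra is generated by the directed union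
  of the algebras \<open>C \<Otimes> D\<close>, so every measurable set is approximated in measure by sets of
  some \<open>C \<Otimes> D\<close>, and the induction principle for integrable functions lifts this to
  \<open>L\<^sup>1\<close>. If \<open>F \<supseteq> C \<Otimes> D\<close>, then \<open>h\<close> is \<open>F\<close>-measurable, so by the \<open>L\<^sup>1\<close>-contractivity of
  conditional expectation \<open>\<parallel>\<mu>\<^sup>F f - f\<parallel>\<^sub>1 \<le> 2 \<parallel>f - h\<parallel>\<^sub>1\<close>. Markov's inequality makes the
  \<open>\<mu>\<close>-measure of \<open>{|\<mu>\<^sup>F f - f| \<ge> \<epsilon>}\<close> small, and absolute continuity, in its
  \<open>\<epsilon>\<close>-\<open>\<delta>\<close> form for finite measures, transfers this to \<open>\<nu>\<close>.
\<close>

lemma finite_sigma_sets: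
  assumes "finite S" "S \<subseteq> Pow \<Omega>"
  shows "finite (sigma_sets \<Omega> S)"
proof -
  \<comment> \<open>Every generated set is a union of atoms, the classes of points lying in the same members of \<open>S\<close>.\<close>
  define cell where "cell P = {x \<in> \<Omega>. {s \<in> S. x \<in> s} \<in> P}" for P
  have "sigma_sets \<Omega> S \<subseteq> cell ` Pow (Pow S)"
  proof
    fix A assume "A \<in> sigma_sets \<Omega> S"
    then show "A \<in> cell ` Pow (Pow S)"
    proof induct
      case (Basic a)
      then have "a = cell {T \<in> Pow S. a \<in> T}"
        using assms(2) by (auto simp: cell_def)
      then show ?case by blast
    next
      case Empty
      have "{} = cell {}" by (simp add: cell_def)
      then show ?case by blast
    next
      case (Compl a)
      then obtain P where "P \<subseteq> Pow S" "a = cell P" by blast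
      then have "\<Omega> - a = cell (Pow S - P)" by (auto simp: cell_def)
      then show ?case by blast
    next
      case (Union a)
      then have "\<forall>i. \<exists>P. P \<subseteq> Pow S \<and> a i = cell P"
        by blast
      then obtain P where "\<And>i. P i \<subseteq> Pow S \<and> a i = cell (P i)"
        by metis
      then have "(\<Union>i. a i) = cell (\<Union>i. P i)" "(\<Union>i. P i) \<subseteq> Pow S"
        by (auto simp: cell_def)
      then show ?case by blast
    qed
  qed
  then show ?thesis
    using assms(1) by (meson finite_Pow_iff finite_imageI finite_subset)
qed

lemma finite_subalgebra_sigma:
  assumes "finite S" "S \<subseteq> sets M"
  shows "subalgebra M (sigma (space M) S)" "finite (sets (sigma (space M) S))"
    "S \<subseteq> sets (sigma (space M) S)"
proof -
  have S: "S \<subseteq> Pow (space M)"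
    using assms(2) sets.sets_into_space by blast
  show "subalgebra M (sigma (space M) S)"
    using S assms(2) by (simp add: subalgebra_def sets.sigma_sets_subset)
  show "finite (sets (sigma (space M) S))"
    using S assms(1) by (simp add: finite_sigma_sets)
  show "S \<subseteq> sets (sigma (space M) S)"
    using S by auto
qed

lemma subalgebra_pair_measure:
  assumes "subalgebra M1 C" "subalgebra M2 D"
  shows "subalgebra (M1 \<Otimes>\<^sub>M M2) (C \<Otimes>\<^sub>M D)"
  using assms unfolding subalgebra_def space_pair_measure sets_pair_measure
  by (auto intro!: sigma_sets_subseteq) blast

lemma algebra_UN_sets_directed:
  assumes "\<N> \<noteq> {}" and space: "\<And>N. N \<in> \<N> \<Longrightarrow> space N = \<Omega>"
    and directed: "\<And>N1 N2. N1 \<in> \<N> \<Longrightarrow> N2 \<in> \<N> \<Longrightarrow> \<exists>N\<in>\<N>. sets N1 \<subseteq> sets N \<and> sets N2 \<subseteq> sets N"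
  shows "algebra \<Omega> (\<Union>N\<in>\<N>. sets N)"
  unfolding algebra_iff_Un
proof (intro conjI ballI)
  show "(\<Union>N\<in>\<N>. sets N) \<subseteq> Pow \<Omega>"
    using space sets.sets_into_space by fastforce
  show "{} \<in> (\<Union>N\<in>\<N>. sets N)"
    using assms(1) by blast
  show "\<Omega> - a \<in> (\<Union>N\<in>\<N>. sets N)" if "a \<in> (\<Union>N\<in>\<N>. sets N)" for a
    using that space by (metis UN_iff sets.compl_sets)
  show "a \<union> b \<in> (\<Union>N\<in>\<N>. sets N)"
    if ab: "a \<in> (\<Union>N\<in>\<N>. sets N)" "b \<in> (\<Union>N\<in>\<N>. sets N)" for a b
  proof -
    obtain N1 N2 where "N1 \<in> \<N>" "a \<in> sets N1" "N2 \<in> \<N>" "b \<in> sets N2"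
      using ab by blast
    with directed obtain N where "N \<in> \<N>" "a \<in> sets N" "b \<in> sets N"
      by blast
    then show ?thesis by blast
  qed
qed

lemma (in finite_measure) measure_sym_diff_UN_le:
  fixes a b :: "nat \<Rightarrow> 'a set"
  assumes a: "\<And>i. a i \<in> sets M" and b: "\<And>i. b i \<in> sets M"
  shows "measure M (sym_diff (\<Union>i. a i) (\<Union>i<n. b i))
    \<le> measure M (\<Union>i. a i) - measure M (\<Union>i<n. a i) + (\<Sum>i<n. measure M (sym_diff (a i) (b i)))"
proof -
  have sets: "(\<Union>i. a i) \<in> sets M" "(\<Union>i<n. a i) \<in> sets M" "(\<Union>i<n. sym_diff (a i) (b i)) \<in> sets M"
    using a b by auto
  have "sym_diff (\<Union>i. a i) (\<Union>i<n. b i) \<subseteq> ((\<Union>i. a i) - (\<Union>i<n. a i)) \<union> (\<Union>i<n. sym_diff (a i) (b i))"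
    by blast
  then have "measure M (sym_diff (\<Union>i. a i) (\<Union>i<n. b i))
      \<le> measure M (((\<Union>i. a i) - (\<Union>i<n. a i)) \<union> (\<Union>i<n. sym_diff (a i) (b i)))"
    using sets by (intro finite_measure_mono) auto
  moreover have "\<dots> \<le> measure M ((\<Union>i. a i) - (\<Union>i<n. a i)) + measure M (\<Union>i<n. sym_diff (a i) (b i))"
    using sets by (intro measure_Un_le) auto
  moreover have "measure M ((\<Union>i. a i) - (\<Union>i<n. a i)) = measure M (\<Union>i. a i) - measure M (\<Union>i<n. a i)"
    using sets by (intro finite_measure_Diff) auto
  moreover have "measure M (\<Union>i<n. sym_diff (a i) (b i)) \<le> (\<Sum>i<n. measure M (sym_diff (a i) (b i)))"
    using a b by (intro measure_UNION_le) auto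
  ultimately show ?thesis
    by linarith
qed

lemma (in finite_measure) approx_by_generating_algebra:
  assumes A: "algebra (space M) A" and gen: "sets M = sigma_sets (space M) A"
    and B: "B \<in> sets M" and e: "e > 0"
  shows "\<exists>B'\<in>A. measure M (sym_diff B B') < e"
proof -
  interpret A: algebra "space M" A by (fact A)
  have A_sets: "A \<subseteq> sets M"
    using gen by auto
  from B have "B \<in> sigma_sets (space M) A"
    unfolding gen .
  then show ?thesis
    using e
  proof (induct arbitrary: e)
    case (Basic a)
    then show ?case by force
  next
    case Empty
    then show ?case by force
  next
    case (Compl a)
    then obtain B' where "B' \<in> A" "measure M (sym_diff a B') < e"
      by blast
    moreover have "sym_diff (space M - a) (space M - B') = sym_diff a B'"
      using Compl(1) \<open>B' \<in> A\<close> A.sets_into_space sigma_sets_into_sp[OF A.space_closed] by blast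
    ultimately show ?case
      by (metis A.compl_sets)
  next
    case (Union a)
    have a_sets: "a i \<in> sets M" for i
      using Union(1) unfolding gen .
    define U where "U n = (\<Union>i<n. a i)" for n
    have "incseq U"
      unfolding U_def incseq_def by (metis UN_mono lessThan_subset_iff order_refl)
    moreover have "range U \<subseteq> sets M"
      using a_sets by (auto simp: U_def)
    ultimately have "(\<lambda>n. measure M (U n)) \<longlonglongrightarrow> measure M (\<Union>n. U n)"
      by (intro finite_Lim_measure_incseq)
    moreover have "(\<Union>n. U n) = (\<Union>i. a i)"
      by (auto simp: U_def)
    ultimately obtain N where "norm (measure M (U N) - measure M (\<Union>i. a i)) < e / 2"
      using \<open>e > 0\<close> by (metis LIMSEQ_D half_gt_zero order.refl)
    then have N: "measure M (\<Union>i. a i) - measure M (U N) < e / 2"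
      by (simp only: real_norm_def)
    define d where "d = e / (2 * (real N + 1))"
    have "d > 0"
      using \<open>e > 0\<close> by (simp add: d_def)
    with Union(2) have "\<forall>i. \<exists>B'\<in>A. measure M (sym_diff (a i) B') < d"
      by blast
    then obtain b where b: "\<And>i. b i \<in> A" "\<And>i. measure M (sym_diff (a i) (b i)) < d"
      by metis
    have b_sets: "b i \<in> sets M" for i
      using b(1) A_sets by blast
    have "(\<Sum>i<N. measure M (sym_diff (a i) (b i))) \<le> real N * d"
      using sum_bounded_above[of "{..<N}" "\<lambda>i. measure M (sym_diff (a i) (b i))" d] b(2)
      by (simp add: less_imp_le)
    also have "real N * d < e / 2"
      using \<open>e > 0\<close> by (simp add: d_def field_simps)
    finally have "measure M (sym_diff (\<Union>i. a i) (\<Union>i<N. b i)) < e"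
      using measure_sym_diff_UN_le[where a=a and b=b and n=N, OF a_sets b_sets] N unfolding U_def by linarith
    moreover have "(\<Union>i<N. b i) \<in> A"
      using b(1) by blast
    ultimately show ?case
      by blast
  qed
qed

lemma integral_abs_diff_triangle:
  fixes f g h :: "'a \<Rightarrow> real"
  assumes "integrable M f" "integrable M g" "integrable M h"
  shows "(\<integral>x. \<bar>f x - h x\<bar> \<partial>M) \<le> (\<integral>x. \<bar>f x - g x\<bar> \<partial>M) + (\<integral>x. \<bar>g x - h x\<bar> \<partial>M)"
proof -
  have "(\<integral>x. \<bar>f x - h x\<bar> \<partial>M) \<le> (\<integral>x. \<bar>f x - g x\<bar> + \<bar>g x - h x\<bar> \<partial>M)"
    using assms by (intro integral_mono) auto
  also have "\<dots> = (\<integral>x. \<bar>f x - g x\<bar> \<partial>M) + (\<integral>x. \<bar>g x - h x\<bar> \<partial>M)"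
    using assms by (intro Bochner_Integration.integral_add) auto
  finally show ?thesis .
qed

lemma (in finite_measure) integral_abs_indicator_scaleR_diff:
  fixes c :: real
  assumes "A \<in> sets M" "B \<in> sets M"
  shows "(\<integral>x. \<bar>indicator A x *\<^sub>R c - indicator B x *\<^sub>R c\<bar> \<partial>M) = \<bar>c\<bar> * measure M (sym_diff A B)"
proof -
  have "\<bar>indicator A x *\<^sub>R c - indicator B x *\<^sub>R c\<bar> = \<bar>c\<bar> * indicator (sym_diff A B) x" for x
    by (auto simp: indicator_def)
  then show ?thesis
    using assms by simp
qed

lemma integral_abs_diff_tendsto_zero:
  fixes f :: "'a \<Rightarrow> real"
  assumes f: "integrable M f" and s: "\<And>i. s i \<in> borel_measurable M"
    and lim: "\<And>x. x \<in> space M \<Longrightarrow> (\<lambda>i. s i x) \<longlonglongrightarrow> f x"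
    and bound: "\<And>i x. x \<in> space M \<Longrightarrow> \<bar>s i x\<bar> \<le> 2 * \<bar>f x\<bar>"
  shows "(\<lambda>i. \<integral>x. \<bar>f x - s i x\<bar> \<partial>M) \<longlonglongrightarrow> 0"
proof -
  have "(\<lambda>i. \<integral>x. \<bar>s i x - f x\<bar> \<partial>M) \<longlonglongrightarrow> (\<integral>x. 0 \<partial>M)"
  proof (rule integral_dominated_convergence[where w="\<lambda>x. 3 * \<bar>f x\<bar>"])
    show "AE x in M. (\<lambda>i. \<bar>s i x - f x\<bar>) \<longlonglongrightarrow> 0"
      by (intro AE_I2 tendsto_rabs_zero LIM_zero lim)
    show "AE x in M. norm \<bar>s i x - f x\<bar> \<le> 3 * \<bar>f x\<bar>" for i
    proof (rule AE_I2)
      fix x assume "x \<in> space M"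
      with bound[of x i] show "norm \<bar>s i x - f x\<bar> \<le> 3 * \<bar>f x\<bar>" by simp
    qed
  qed (use f s in auto)
  then show ?thesis
    by (simp add: abs_minus_commute)
qed

lemma (in finite_measure) integrable_approx_directed_subalgebras:
  fixes f :: "'a \<Rightarrow> real"
  assumes "\<N> \<noteq> {}" and sub: "\<And>N. N \<in> \<N> \<Longrightarrow> subalgebra M N"
    and directed: "\<And>N1 N2. N1 \<in> \<N> \<Longrightarrow> N2 \<in> \<N> \<Longrightarrow> \<exists>N\<in>\<N>. sets N1 \<subseteq> sets N \<and> sets N2 \<subseteq> sets N"
    and gen: "sets M = sigma_sets (space M) (\<Union>N\<in>\<N>. sets N)"
    and f: "integrable M f" and e: "e > 0"
  shows "\<exists>N\<in>\<N>. \<exists>h\<in>borel_measurable N. integrable M h \<and> (\<integral>x. \<bar>f x - h x\<bar> \<partial>M) < e"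
proof -
  have algebra: "algebra (space M) (\<Union>N\<in>\<N>. sets N)"
    using assms(1) sub directed by (intro algebra_UN_sets_directed) (auto simp: subalgebra_def)
  have measurable_larger: "h \<in> borel_measurable N"
    if "N1 \<in> \<N>" "N \<in> \<N>" "sets N1 \<subseteq> sets N" "h \<in> borel_measurable N1"
    for N1 N and h :: "'a \<Rightarrow> real"
    using that sub[of N1] sub[of N] measurable_mono[of borel borel N1 N]
    by (auto simp: subalgebra_def)
  from f e show ?thesis
  proof (induct arbitrary: e)
    case (base A c)
    define d where "d = e / (\<bar>c\<bar> + 1)"
    have "d > 0"
      using base(3) by (simp add: d_def)
    with approx_by_generating_algebra[OF algebra gen base(1)] obtain N B
      where N: "N \<in> \<N>" "B \<in> sets N" and B: "measure M (sym_diff A B) < d"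
      by blast
    have "B \<in> sets M"
      using N sub by (auto simp: subalgebra_def)
    define h where "h x = indicator B x *\<^sub>R c" for x
    have "h \<in> borel_measurable N"
      unfolding h_def using N(2) by measurable
    moreover have "integrable M h"
      unfolding h_def using \<open>B \<in> sets M\<close>
      by (intro integrable_scaleR_left integrable_real_indicator) (auto simp: less_top[symmetric])
    moreover have "(\<integral>x. \<bar>indicator A x *\<^sub>R c - h x\<bar> \<partial>M) < e"
    proof -
      have "(\<integral>x. \<bar>indicator A x *\<^sub>R c - h x\<bar> \<partial>M) = \<bar>c\<bar> * measure M (sym_diff A B)"
        unfolding h_def using base(1) \<open>B \<in> sets M\<close> by (rule integral_abs_indicator_scaleR_diff)
      also have "\<dots> \<le> \<bar>c\<bar> * d"
        using B by (intro mult_left_mono) auto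
      also have "\<dots> < e"
        using base(3) by (simp add: d_def field_simps)
      finally show ?thesis .
    qed
    ultimately have "h \<in> borel_measurable N \<and> integrable M h \<and> (\<integral>x. \<bar>indicator A x *\<^sub>R c - h x\<bar> \<partial>M) < e"
      by simp
    with N(1) show ?case
      by blast
  next
    case (add f g)
    obtain N1 h1 where h1: "N1 \<in> \<N>" "h1 \<in> borel_measurable N1" "integrable M h1"
      "(\<integral>x. \<bar>f x - h1 x\<bar> \<partial>M) < e / 2"
      using add(2)[of "e / 2"] add(5) by auto
    obtain N2 h2 where h2: "N2 \<in> \<N>" "h2 \<in> borel_measurable N2" "integrable M h2"
      "(\<integral>x. \<bar>g x - h2 x\<bar> \<partial>M) < e / 2"
      using add(4)[of "e / 2"] add(5) by auto
    obtain N where N: "N \<in> \<N>" "sets N1 \<subseteq> sets N" "sets N2 \<subseteq> sets N"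
      using directed[OF h1(1) h2(1)] by blast
    have h_meas: "(\<lambda>x. h1 x + h2 x) \<in> borel_measurable N"
      using measurable_larger[OF h1(1) N(1,2) h1(2)] measurable_larger[OF h2(1) N(1,3) h2(2)]
      by measurable
    have h_int: "integrable M (\<lambda>x. h1 x + h2 x)"
      using h1(3) h2(3) by auto
    have "(\<integral>x. \<bar>(f x + g x) - (h1 x + h2 x)\<bar> \<partial>M)
        \<le> (\<integral>x. \<bar>(f x + g x) - (h1 x + g x)\<bar> \<partial>M) + (\<integral>x. \<bar>(h1 x + g x) - (h1 x + h2 x)\<bar> \<partial>M)"
      using add(1,3) h1(3) h2(3) by (intro integral_abs_diff_triangle) auto
    also have "\<dots> = (\<integral>x. \<bar>f x - h1 x\<bar> \<partial>M) + (\<integral>x. \<bar>g x - h2 x\<bar> \<partial>M)"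
      by simp
    also have "\<dots> < e"
      using h1(4) h2(4) by linarith
    finally have "(\<integral>x. \<bar>(f x + g x) - (h1 x + h2 x)\<bar> \<partial>M) < e" .
    with N(1) h_meas h_int show ?case
      by blast
  next
    case (lim f s)
    have "(\<lambda>i. \<integral>x. \<bar>f x - s i x\<bar> \<partial>M) \<longlonglongrightarrow> 0"
      using lim(1,3-5) by (intro integral_abs_diff_tendsto_zero) auto
    from LIMSEQ_D[OF this half_gt_zero[OF lim(6)]]
    obtain i where "norm ((\<integral>x. \<bar>f x - s i x\<bar> \<partial>M) - 0) < e / 2"
      by auto
    then have i: "(\<integral>x. \<bar>f x - s i x\<bar> \<partial>M) < e / 2"
      by (simp add: abs_less_iff)
    obtain N h where h: "N \<in> \<N>" "h \<in> borel_measurable N" "integrable M h"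
      "(\<integral>x. \<bar>s i x - h x\<bar> \<partial>M) < e / 2"
      using lim(2) half_gt_zero[OF lim(6)] by blast
    have "(\<integral>x. \<bar>f x - h x\<bar> \<partial>M) \<le> (\<integral>x. \<bar>f x - s i x\<bar> \<partial>M) + (\<integral>x. \<bar>s i x - h x\<bar> \<partial>M)"
      using lim(1,5) h(3) by (intro integral_abs_diff_triangle) auto
    then have "(\<integral>x. \<bar>f x - h x\<bar> \<partial>M) < e"
      using h(4) i by linarith
    with h(1-3) show ?case
      by blast
  qed
qed

definition finite_product_subalgebras :: "'a measure \<Rightarrow> 'b measure \<Rightarrow> ('a \<times> 'b) measure set" where
  "finite_product_subalgebras M1 M2 =
    {C \<Otimes>\<^sub>M D | C D. subalgebra M1 C \<and> finite (sets C) \<and> subalgebra M2 D \<and> finite (sets D)}"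

lemma finite_product_subalgebras_subalgebra:
  "N \<in> finite_product_subalgebras M1 M2 \<Longrightarrow> subalgebra (M1 \<Otimes>\<^sub>M M2) N"
  unfolding finite_product_subalgebras_def by (auto intro: subalgebra_pair_measure)

lemma sigma_in_finite_product_subalgebras:
  assumes "finite S" "S \<subseteq> sets M1" "finite T" "T \<subseteq> sets M2"
  shows "sigma (space M1) S \<Otimes>\<^sub>M sigma (space M2) T \<in> finite_product_subalgebras M1 M2"
  using finite_subalgebra_sigma(1,2)[OF assms(1,2)] finite_subalgebra_sigma(1,2)[OF assms(3,4)]
  unfolding finite_product_subalgebras_def by blast

lemma finite_product_subalgebras_directed:
  assumes "N1 \<in> finite_product_subalgebras M1 M2" "N2 \<in> finite_product_subalgebras M1 M2"
  shows "\<exists>N\<in>finite_product_subalgebras M1 M2. sets N1 \<subseteq> sets N \<and> sets N2 \<subseteq> sets N"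
proof -
  obtain C1 D1 C2 D2 where N: "N1 = C1 \<Otimes>\<^sub>M D1" "N2 = C2 \<Otimes>\<^sub>M D2"
    and C: "subalgebra M1 C1" "finite (sets C1)" "subalgebra M1 C2" "finite (sets C2)"
    and D: "subalgebra M2 D1" "finite (sets D1)" "subalgebra M2 D2" "finite (sets D2)"
    using assms unfolding finite_product_subalgebras_def by blast
  let ?C = "sigma (space M1) (sets C1 \<union> sets C2)" and ?D = "sigma (space M2) (sets D1 \<union> sets D2)"
  have S: "finite (sets C1 \<union> sets C2)" "sets C1 \<union> sets C2 \<subseteq> sets M1"
    and T: "finite (sets D1 \<union> sets D2)" "sets D1 \<union> sets D2 \<subseteq> sets M2"
    using C D by (auto simp: subalgebra_def)
  have "subalgebra ?C C1" "subalgebra ?C C2" "subalgebra ?D D1" "subalgebra ?D D2"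
    using finite_subalgebra_sigma(3)[OF S] finite_subalgebra_sigma(3)[OF T] C(1,3) D(1,3)
    by (simp_all add: subalgebra_def space_measure_of_conv)
  then have "subalgebra (?C \<Otimes>\<^sub>M ?D) N1" "subalgebra (?C \<Otimes>\<^sub>M ?D) N2"
    unfolding N by (blast intro: subalgebra_pair_measure)+
  then have "sets N1 \<subseteq> sets (?C \<Otimes>\<^sub>M ?D)" "sets N2 \<subseteq> sets (?C \<Otimes>\<^sub>M ?D)"
    by (simp_all add: subalgebra_def)
  with sigma_in_finite_product_subalgebras[OF S T] show ?thesis
    by blast
qed

lemma sets_pair_measure_finite_product_subalgebras:
  "sets (M1 \<Otimes>\<^sub>M M2) =
    sigma_sets (space (M1 \<Otimes>\<^sub>M M2)) (\<Union>N\<in>finite_product_subalgebras M1 M2. sets N)"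
proof
  show "sigma_sets (space (M1 \<Otimes>\<^sub>M M2)) (\<Union>N\<in>finite_product_subalgebras M1 M2. sets N) \<subseteq> sets (M1 \<Otimes>\<^sub>M M2)"
    by (intro sets.sigma_sets_subset) (auto simp: subalgebra_def dest!: finite_product_subalgebras_subalgebra)
  have "a \<times> b \<in> (\<Union>N\<in>finite_product_subalgebras M1 M2. sets N)"
    if "a \<in> sets M1" "b \<in> sets M2" for a b
  proof -
    have "{a} \<subseteq> sets M1" "{b} \<subseteq> sets M2"
      using that by auto
    then have "a \<times> b \<in> sets (sigma (space M1) {a} \<Otimes>\<^sub>M sigma (space M2) {b})"
      using finite_subalgebra_sigma(3)[of "{a}" M1] finite_subalgebra_sigma(3)[of "{b}" M2]
      by (intro pair_measureI) auto
    with sigma_in_finite_product_subalgebras[of "{a}" M1 "{b}" M2] that show ?thesis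
      by blast
  qed
  then show "sets (M1 \<Otimes>\<^sub>M M2) \<subseteq> sigma_sets (space (M1 \<Otimes>\<^sub>M M2)) (\<Union>N\<in>finite_product_subalgebras M1 M2. sets N)"
    unfolding sets_pair_measure space_pair_measure by (intro sigma_sets_subseteq) blast
qed

lemma integrable_approx_finite_product_subalgebras:
  fixes f :: "_ \<Rightarrow> real"
  assumes "finite_measure M" and sets_M: "sets M = sets (M1 \<Otimes>\<^sub>M M2)"
    and f: "integrable M f" and e: "e > 0"
  shows "\<exists>C D. subalgebra M1 C \<and> finite (sets C) \<and> subalgebra M2 D \<and> finite (sets D) \<and>
    (\<exists>h\<in>borel_measurable (C \<Otimes>\<^sub>M D). integrable M h \<and> (\<integral>x. \<bar>f x - h x\<bar> \<partial>M) < e)"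
proof -
  have space_M: "space M = space (M1 \<Otimes>\<^sub>M M2)"
    using sets_M by (rule sets_eq_imp_space_eq)
  have nonempty: "finite_product_subalgebras M1 M2 \<noteq> {}"
    using sigma_in_finite_product_subalgebras[of "{}" M1 "{}" M2] by auto
  have sub: "subalgebra M N" if "N \<in> finite_product_subalgebras M1 M2" for N
    using finite_product_subalgebras_subalgebra[OF that] sets_M space_M by (simp add: subalgebra_def)
  have gen: "sets M = sigma_sets (space M) (\<Union>N\<in>finite_product_subalgebras M1 M2. sets N)"
    unfolding sets_M space_M by (rule sets_pair_measure_finite_product_subalgebras)
  from finite_measure.integrable_approx_directed_subalgebras
    [OF assms(1) nonempty sub finite_product_subalgebras_directed gen f e]
  show ?thesis
    unfolding finite_product_subalgebras_def by blast
qed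

lemma (in sigma_finite_subalgebra) integral_abs_real_cond_exp_le:
  assumes f: "integrable M f"
  shows "(\<integral>x. \<bar>real_cond_exp M F f x\<bar> \<partial>M) \<le> (\<integral>x. \<bar>f x\<bar> \<partial>M)"
proof -
  have "convex_on UNIV (\<lambda>x::real. \<bar>x\<bar>)"
    using convex_on_dist[of UNIV "0::real"] by (simp add: dist_real_def)
  then have "AE x in M. \<bar>real_cond_exp M F f x\<bar> \<le> real_cond_exp M F (\<lambda>x. \<bar>f x\<bar>) x"
    using f by (intro real_cond_exp_jensens_inequality(2)[where I=UNIV]) auto
  then have "(\<integral>x. \<bar>real_cond_exp M F f x\<bar> \<partial>M) \<le> (\<integral>x. real_cond_exp M F (\<lambda>x. \<bar>f x\<bar>) x \<partial>M)"
    using f by (intro integral_mono_AE) auto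
  also have "\<dots> = (\<integral>x. \<bar>f x\<bar> \<partial>M)"
    using f by (intro real_cond_exp_int(2)) auto
  finally show ?thesis .
qed

lemma (in sigma_finite_subalgebra) integral_abs_real_cond_exp_diff_le:
  assumes f: "integrable M f" and h: "integrable M h" "h \<in> borel_measurable F"
  shows "(\<integral>x. \<bar>real_cond_exp M F f x - f x\<bar> \<partial>M) \<le> 2 * (\<integral>x. \<bar>f x - h x\<bar> \<partial>M)"
proof -
  have fh: "integrable M (\<lambda>x. f x - h x)"
    using f h by auto
  \<comment> \<open>Since \<open>h\<close> is \<open>F\<close>-measurable, \<open>E[f|F] - f = E[f - h|F] - (f - h)\<close> almost everywhere.\<close>
  have "AE x in M. real_cond_exp M F (\<lambda>x. f x - h x) x = real_cond_exp M F f x - h x"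
    using real_cond_exp_diff[OF f h(1)] real_cond_exp_F_meas[OF h] by eventually_elim auto
  then have "AE x in M. \<bar>real_cond_exp M F f x - f x\<bar>
      \<le> \<bar>real_cond_exp M F (\<lambda>x. f x - h x) x\<bar> + \<bar>f x - h x\<bar>"
    by eventually_elim auto
  then have "(\<integral>x. \<bar>real_cond_exp M F f x - f x\<bar> \<partial>M)
      \<le> (\<integral>x. \<bar>real_cond_exp M F (\<lambda>x. f x - h x) x\<bar> + \<bar>f x - h x\<bar> \<partial>M)"
    using f fh real_cond_exp_int(1)[OF f] real_cond_exp_int(1)[OF fh] by (intro integral_mono_AE) auto
  also have "\<dots> = (\<integral>x. \<bar>real_cond_exp M F (\<lambda>x. f x - h x) x\<bar> \<partial>M) + (\<integral>x. \<bar>f x - h x\<bar> \<partial>M)"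
    using fh real_cond_exp_int(1)[OF fh] by (intro Bochner_Integration.integral_add) auto
  also have "\<dots> \<le> 2 * (\<integral>x. \<bar>f x - h x\<bar> \<partial>M)"
    using integral_abs_real_cond_exp_le[OF fh] by simp
  finally show ?thesis .
qed

lemma (in sigma_finite_subalgebra) measure_real_cond_exp_deviation_le:
  assumes f: "integrable M f" and h: "integrable M h" "h \<in> borel_measurable F" and e: "e > 0"
  shows "measure M {x \<in> space M. e \<le> \<bar>real_cond_exp M F f x - f x\<bar>} \<le> 2 * (\<integral>x. \<bar>f x - h x\<bar> \<partial>M) / e"
proof -
  have "measure M {x \<in> space M. e \<le> \<bar>real_cond_exp M F f x - f x\<bar>}
      \<le> (\<integral>x. \<bar>real_cond_exp M F f x - f x\<bar> \<partial>M) / e"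
    using f real_cond_exp_int(1)[OF f] by (intro integral_Markov_inequality_measure[OF _ sets.top _ e]) auto
  also have "\<dots> \<le> 2 * (\<integral>x. \<bar>f x - h x\<bar> \<partial>M) / e"
    using integral_abs_real_cond_exp_diff_le[OF f h] e by (intro divide_right_mono) auto
  finally show ?thesis .
qed

lemma absolutely_continuous_epsilon_delta:
  assumes "finite_measure M" "finite_measure N" "sets N = sets M"
    and ac: "absolutely_continuous M N" and e: "e > 0"
  shows "\<exists>d>0. \<forall>A\<in>sets M. measure M A < d \<longrightarrow> measure N A < e"
proof (rule ccontr)
  interpret M: finite_measure M by fact
  interpret N: finite_measure N by fact
  assume "\<not> ?thesis"
  then have "\<forall>n. \<exists>A\<in>sets M. measure M A < (1/2)^n \<and> e \<le> measure N A"
    by (metis not_less zero_less_divide_1_iff zero_less_numeral zero_less_power)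
  then obtain A where A: "\<And>n. A n \<in> sets M" "\<And>n. measure M (A n) < (1/2)^n"
    "\<And>n. e \<le> measure N (A n)"
    by metis
  \<comment> \<open>Borel--Cantelli: \<open>limsup A\<close> is \<open>M\<close>-null, hence \<open>N\<close>-null, yet it has \<open>N\<close>-measure at least \<open>e\<close>.\<close>
  have "summable (\<lambda>n. measure M (A n))"
    by (rule summable_comparison_test[of _ "\<lambda>n. (1/2)^n"]) (use A(2) in \<open>auto intro!: exI[of _ 0] less_imp_le\<close>)
  then have "limsup A \<in> null_sets M"
    by (intro borel_cantelli_limsup1) (auto simp: A(1) M.emeasure_real less_top[symmetric])
  then have "limsup A \<in> null_sets N"
    using ac unfolding absolutely_continuous_def by auto
  then have null: "measure N (limsup A) = 0"
    by (simp add: measure_def null_setsD1)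
  define B where "B m = (\<Union>n\<in>{m..}. A n)" for m
  have B_sets: "range B \<subseteq> sets N"
    unfolding B_def using A(1) assms(3) by auto
  have "decseq B"
    unfolding B_def decseq_def by (auto intro: order_trans)
  with B_sets have "(\<lambda>m. measure N (B m)) \<longlonglongrightarrow> measure N (\<Inter>m. B m)"
    using N.finite_Lim_measure_decseq by blast
  moreover have "(\<Inter>m. B m) = limsup A"
    unfolding B_def limsup_INF_SUP by auto
  ultimately have lim: "(\<lambda>m. measure N (B m)) \<longlonglongrightarrow> 0"
    using null by simp
  have "e \<le> measure N (B m)" for m
  proof -
    have "measure N (A m) \<le> measure N (B m)"
      by (rule N.finite_measure_mono) (use B_sets in \<open>auto simp: B_def\<close>)
    then show ?thesis
      using A(3)[of m] by linarith
  qed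
  then have "e \<le> 0"
    by (intro LIMSEQ_le_const[OF lim]) auto
  with e show False
    by simp
qed

theorem corollary1:
  fixes M1 :: "'a measure" and M2 :: "'b measure"
    and \<mu> \<nu> :: "('a \<times> 'b) measure" and f :: "'a \<times> 'b \<Rightarrow> real" and \<epsilon> :: real
  assumes sets_mu: "sets \<mu> = sets (M1 \<Otimes>\<^sub>M M2)"
    and fin_mu: "finite_measure \<mu>"
    and int_f: "integrable \<mu> f"
    and sets_nu: "sets \<nu> = sets (M1 \<Otimes>\<^sub>M M2)"
    and fin_nu: "finite_measure \<nu>"
    and ac: "absolutely_continuous \<mu> \<nu>"
    and eps: "\<epsilon> > 0"
  shows "\<exists>C D. subalgebra M1 C \<and> finite (sets C) \<and> subalgebra M2 D \<and> finite (sets D) \<and>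
           (\<forall>F. subalgebra \<mu> F \<and> sets (C \<Otimes>\<^sub>M D) \<subseteq> sets F \<longrightarrow>
              measure \<nu> {z \<in> space \<nu>. \<bar>real_cond_exp \<mu> F f z - f z\<bar> \<ge> \<epsilon>} < \<epsilon>)"
proof -
  have sets_nu_mu: "sets \<nu> = sets \<mu>"
    using sets_mu sets_nu by simp
  obtain \<delta> where "\<delta> > 0" and small: "\<And>A. A \<in> sets \<mu> \<Longrightarrow> measure \<mu> A < \<delta> \<Longrightarrow> measure \<nu> A < \<epsilon>"
    using absolutely_continuous_epsilon_delta[OF fin_mu fin_nu sets_nu_mu ac eps] by blast
  with eps have "\<delta> * \<epsilon> / 2 > 0"
    by simp
  from integrable_approx_finite_product_subalgebras[OF fin_mu sets_mu int_f this]
  obtain C D h where CD: "subalgebra M1 C" "finite (sets C)" "subalgebra M2 D" "finite (sets D)"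
    and h: "h \<in> borel_measurable (C \<Otimes>\<^sub>M D)" "integrable \<mu> h" "(\<integral>x. \<bar>f x - h x\<bar> \<partial>\<mu>) < \<delta> * \<epsilon> / 2"
    by blast
  have "measure \<nu> {z \<in> space \<nu>. \<bar>real_cond_exp \<mu> F f z - f z\<bar> \<ge> \<epsilon>} < \<epsilon>"
    if F: "subalgebra \<mu> F" "sets (C \<Otimes>\<^sub>M D) \<subseteq> sets F" for F
  proof -
    interpret finite_measure_subalgebra \<mu> F
      using fin_mu F(1) by (simp add: finite_measure_subalgebra_def finite_measure_subalgebra_axioms_def)
    have "subalgebra F (C \<Otimes>\<^sub>M D)"
      using CD F sets_eq_imp_space_eq[OF sets_mu] by (simp add: subalgebra_def space_pair_measure)
    then have "h \<in> borel_measurable F"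
      using h(1) by (rule measurable_from_subalg)
    let ?A = "{z \<in> space \<mu>. \<epsilon> \<le> \<bar>real_cond_exp \<mu> F f z - f z\<bar>}"
    have "measure \<mu> ?A \<le> 2 * (\<integral>x. \<bar>f x - h x\<bar> \<partial>\<mu>) / \<epsilon>"
      by (rule measure_real_cond_exp_deviation_le[OF int_f h(2) \<open>h \<in> borel_measurable F\<close> eps])
    also have "\<dots> < \<delta>"
      using h(3) eps by (simp add: field_simps)
    finally have "measure \<mu> ?A < \<delta>" .
    moreover have "?A \<in> sets \<mu>"
      using borel_measurable_integrable[OF int_f] by measurable
    ultimately have "measure \<nu> ?A < \<epsilon>"
      by (rule small[rotated])
    then show ?thesis
      using sets_eq_imp_space_eq[OF sets_nu_mu] by simp
  qed
  with CD show ?thesis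
    by blast
qed

end
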